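(* Let $G=(V,E)$ be a finite graph, $p\in(0,1)$ and $q\in\mathbb N$, and let $\tilde P_{\rm HB}$ and $P_{\rm SB}$ be the transition matrices of the heat-bath and single-bond dynamics for the random-cluster model on $G$ with parameters $p$ and $q$. Then \[ \Bigl(1-p\bigl(1-\tfrac1q\bigr)\Bigr)\lambda(\tilde P_{\rm HB})\;\le\;\lambda(P_{\rm SB})\;\le\;\lambda(\tilde P_{\rm HB}). \]
   Context: Each edge $e$ has endvertices $e^{(1)},e^{(2)}$; for $A\subseteq E$, $c(A)$ is the number of connected components of $(V,A)$. RC measure $\mu(A)\propto(\tfrac{p}{1-p})^{|A|}q^{c(A)}$. Heat-bath dynamics: $\tilde P_{\rm HB}(A,B)=\frac1{|E|}\sum_{e\in E}h_e(A,B)$ where, writing "connected" for "$e^{(1)},e^{(2)}$ are connected in $(V,A\setminus\{e\})$", $h_e=p$ if $B=A\cup\{e\}$ and connected; $1-p$ if $B=A\setminus\{e\}$ and connected; $\frac{p}{p+q(1-p)}$ if $B=A\cup\{e\}$ and not connected; $\frac{q(1-p)}{p+q(1-p)}$ if $B=A\setminus\{e\}$ and not connected; $0$ otherwise. Single-bond dynamics: $P_{\rm SB}(A,B)=\frac1{|E|}\sum_e g_e(A,B)$ with the same cases but connectivity tested in $(V,A)$ and probabilities $p,\ 1-p,\ p/q,\ 1-p/q$ respectively. Both are reversible w.r.t. $\mu$. Spectral gap: $\lambda(P)=1-\max\{|\xi|:\xi\text{ eigenvalue of }P,\ \xi\neq1\}$. *)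

theory Defs
  imports "HOL-Analysis.Analysis"
begin

definition edge_rel :: "('e \<Rightarrow> 'v) \<Rightarrow> ('e \<Rightarrow> 'v) \<Rightarrow> 'e set \<Rightarrow> ('v \<times> 'v) set" where
  "edge_rel end1 end2 A = {(end1 e, end2 e) | e. e \<in> A} \<union> {(end2 e, end1 e) | e. e \<in> A}"

definition connected_in :: "('e \<Rightarrow> 'v) \<Rightarrow> ('e \<Rightarrow> 'v) \<Rightarrow> 'e set \<Rightarrow> 'v \<Rightarrow> 'v \<Rightarrow> bool" where
  "connected_in end1 end2 A u v \<longleftrightarrow> (u, v) \<in> (edge_rel end1 end2 A)\<^sup>*"

definition hb_local :: "('e \<Rightarrow> 'v) \<Rightarrow> ('e \<Rightarrow> 'v) \<Rightarrow> real \<Rightarrow> real \<Rightarrow> 'e \<Rightarrow> 'e set \<Rightarrow> 'e set \<Rightarrow> real" where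
  "hb_local end1 end2 p q e A B =
     (let c = connected_in end1 end2 (A - {e}) (end1 e) (end2 e) in
      if B = A \<union> {e} \<and> c then p
      else if B = A - {e} \<and> c then 1 - p
      else if B = A \<union> {e} \<and> \<not> c then p / (p + q * (1 - p))
      else if B = A - {e} \<and> \<not> c then q * (1 - p) / (p + q * (1 - p))
      else 0)"

definition sb_local :: "('e \<Rightarrow> 'v) \<Rightarrow> ('e \<Rightarrow> 'v) \<Rightarrow> real \<Rightarrow> real \<Rightarrow> 'e \<Rightarrow> 'e set \<Rightarrow> 'e set \<Rightarrow> real" where
  "sb_local end1 end2 p q e A B =
     (let c = connected_in end1 end2 A (end1 e) (end2 e) in
      if B = A \<union> {e} \<and> c then p
      else if B = A - {e} \<and> c then 1 - p
      else if B = A \<union> {e} \<and> \<not> c then p / q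
      else if B = A - {e} \<and> \<not> c then 1 - p / q
      else 0)"

definition P_HB :: "'e set \<Rightarrow> ('e \<Rightarrow> 'v) \<Rightarrow> ('e \<Rightarrow> 'v) \<Rightarrow> real \<Rightarrow> real \<Rightarrow> 'e set \<Rightarrow> 'e set \<Rightarrow> real" where
  "P_HB E end1 end2 p q A B = (\<Sum>e\<in>E. hb_local end1 end2 p q e A B) / real (card E)"

definition P_SB :: "'e set \<Rightarrow> ('e \<Rightarrow> 'v) \<Rightarrow> ('e \<Rightarrow> 'v) \<Rightarrow> real \<Rightarrow> real \<Rightarrow> 'e set \<Rightarrow> 'e set \<Rightarrow> real" where
  "P_SB E end1 end2 p q A B = (\<Sum>e\<in>E. sb_local end1 end2 p q e A B) / real (card E)"

definition is_eigenvalue :: "'e set \<Rightarrow> ('e set \<Rightarrow> 'e set \<Rightarrow> real) \<Rightarrow> complex \<Rightarrow> bool" where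
  "is_eigenvalue E P \<xi> \<longleftrightarrow>
     (\<exists>f :: 'e set \<Rightarrow> complex. (\<exists>B\<in>Pow E. f B \<noteq> 0) \<and>
        (\<forall>A\<in>Pow E. (\<Sum>B\<in>Pow E. complex_of_real (P A B) * f B) = \<xi> * f A))"

definition spectral_gap :: "'e set \<Rightarrow> ('e set \<Rightarrow> 'e set \<Rightarrow> real) \<Rightarrow> real" where
  "spectral_gap E P = 1 - Max {cmod \<xi> | \<xi>. is_eigenvalue E P \<xi> \<and> \<xi> \<noteq> 1}"

end

theory Submission
  imports Defs
begin

text \<open>Both dynamics are reversible with respect to the random-cluster measure, and the heat-bath
  kernel is an average of orthogonal projections, hence positive semidefinite. Off the diagonal,
  c P_HB \<le> P_SB \<le> P_HB with c = 1 - p (1 - 1/q): a single-bond move differs from the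
  heat-bath move only when it cuts or joins a bridge, and then by exactly the factor c. The
  Dirichlet forms therefore compare in the same way, so the single-bond kernel is positive
  semidefinite as well and both kernels have the same harmonic functions. For such kernels the
  spectral gap is the minimum of the Dirichlet form over unit vectors orthogonal to the harmonic
  functions (the Rayleigh quotient is maximised by compactness, a maximiser is an eigenvector,
  and self-adjointness makes all eigenvalues real and finitely many), which turns the comparison
  of Dirichlet forms into the comparison of spectral gaps.\<close>

section \<open>Reversible kernels and the variational spectral gap\<close>

definition inner_on :: "'a set \<Rightarrow> ('a \<Rightarrow> real) \<Rightarrow> ('a \<Rightarrow> real) \<Rightarrow> ('a \<Rightarrow> real) \<Rightarrow> real" where
  "inner_on S w f g = (\<Sum>x\<in>S. w x * f x * g x)"

definition kernel_app :: "'a set \<Rightarrow> ('a \<Rightarrow> 'a \<Rightarrow> real) \<Rightarrow> ('a \<Rightarrow> real) \<Rightarrow> 'a \<Rightarrow> real" where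
  "kernel_app S P f = (\<lambda>x. \<Sum>y\<in>S. P x y * f y)"

definition dirichlet_form :: "'a set \<Rightarrow> ('a \<Rightarrow> real) \<Rightarrow> ('a \<Rightarrow> 'a \<Rightarrow> real) \<Rightarrow> ('a \<Rightarrow> real) \<Rightarrow> real" where
  "dirichlet_form S w P f = inner_on S w f f - inner_on S w f (kernel_app S P f)"

definition harmonic_on :: "'a set \<Rightarrow> ('a \<Rightarrow> 'a \<Rightarrow> real) \<Rightarrow> ('a \<Rightarrow> real) set" where
  "harmonic_on S P = {h. \<forall>x\<in>S. kernel_app S P h x = h x}"

definition eigenvalue_on :: "'a set \<Rightarrow> ('a \<Rightarrow> 'a \<Rightarrow> real) \<Rightarrow> complex \<Rightarrow> bool" where
  "eigenvalue_on S P z \<longleftrightarrow> (\<exists>f :: 'a \<Rightarrow> complex. (\<exists>y\<in>S. f y \<noteq> 0) \<and>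
     (\<forall>x\<in>S. (\<Sum>y\<in>S. complex_of_real (P x y) * f y) = z * f x))"

definition spectral_gap_on :: "'a set \<Rightarrow> ('a \<Rightarrow> 'a \<Rightarrow> real) \<Rightarrow> real" where
  "spectral_gap_on S P = 1 - Max {cmod z | z. eigenvalue_on S P z \<and> z \<noteq> 1}"

lemma spectral_gap_eq_spectral_gap_on: "spectral_gap E P = spectral_gap_on (Pow E) P"
  unfolding spectral_gap_def spectral_gap_on_def is_eigenvalue_def eigenvalue_on_def ..

lemma inner_on_commute: "inner_on S w f g = inner_on S w g f"
  unfolding inner_on_def by (simp add: mult_ac)

lemma inner_on_cong:
  "(\<And>x. x \<in> S \<Longrightarrow> f x = f' x) \<Longrightarrow> (\<And>x. x \<in> S \<Longrightarrow> g x = g' x) \<Longrightarrow> inner_on S w f g = inner_on S w f' g'"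
  unfolding inner_on_def by (rule sum.cong) auto

lemma inner_on_add_left: "inner_on S w (\<lambda>x. f x + g x) h = inner_on S w f h + inner_on S w g h"
  unfolding inner_on_def by (simp add: algebra_simps sum.distrib)

lemma inner_on_diff_left: "inner_on S w (\<lambda>x. f x - g x) h = inner_on S w f h - inner_on S w g h"
  unfolding inner_on_def by (simp add: algebra_simps sum_subtractf)

lemma inner_on_scale_left: "inner_on S w (\<lambda>x. c * f x) h = c * inner_on S w f h"
  unfolding inner_on_def by (simp add: algebra_simps sum_distrib_left)

lemma inner_on_add_right: "inner_on S w h (\<lambda>x. f x + g x) = inner_on S w h f + inner_on S w h g"
  by (metis inner_on_add_left inner_on_commute)

lemma inner_on_diff_right: "inner_on S w h (\<lambda>x. f x - g x) = inner_on S w h f - inner_on S w h g"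
  by (metis inner_on_diff_left inner_on_commute)

lemma inner_on_scale_right: "inner_on S w h (\<lambda>x. c * f x) = c * inner_on S w h f"
  by (metis inner_on_scale_left inner_on_commute)

lemma inner_on_sum_left:
  "inner_on S w (\<lambda>x. \<Sum>i\<in>I. c i * u i x) g = (\<Sum>i\<in>I. c i * inner_on S w (u i) g)"
  unfolding inner_on_def
  by (simp add: sum_distrib_left sum_distrib_right mult_ac sum.swap[of _ I S])

lemma inner_on_zero_left: "(\<And>x. x \<in> S \<Longrightarrow> f x = 0) \<Longrightarrow> inner_on S w f g = 0"
  unfolding inner_on_def by simp

lemma inner_on_indicator_left:
  "finite S \<Longrightarrow> x \<in> S \<Longrightarrow> inner_on S w (\<lambda>y. if y = x then 1 else 0) f = w x * f x"
  unfolding inner_on_def by (simp add: if_distrib if_distribR cong: if_cong)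

lemma inner_on_self_nonneg: "(\<And>x. x \<in> S \<Longrightarrow> 0 < w x) \<Longrightarrow> 0 \<le> inner_on S w f f"
  unfolding inner_on_def by (rule sum_nonneg) (simp add: mult.assoc less_imp_le)

lemma inner_on_self_eq_0_iff:
  assumes "finite S" "\<And>x. x \<in> S \<Longrightarrow> 0 < w x"
  shows "inner_on S w f f = 0 \<longleftrightarrow> (\<forall>x\<in>S. f x = 0)"
proof -
  have "inner_on S w f f = 0 \<longleftrightarrow> (\<forall>x\<in>S. w x * f x * f x = 0)"
    unfolding inner_on_def using assms
    by (intro sum_nonneg_eq_0_iff) (auto simp: mult.assoc less_imp_le)
  also have "\<dots> \<longleftrightarrow> (\<forall>x\<in>S. f x = 0)"
    using assms(2) by (metis less_irrefl mult_eq_0_iff)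
  finally show ?thesis .
qed

lemma inner_on_self_pos_iff:
  "finite S \<Longrightarrow> (\<And>x. x \<in> S \<Longrightarrow> 0 < w x) \<Longrightarrow> 0 < inner_on S w f f \<longleftrightarrow> (\<exists>x\<in>S. f x \<noteq> 0)"
  using inner_on_self_eq_0_iff[of S w f] inner_on_self_nonneg[of S w f] by force

lemma kernel_app_add: "kernel_app S P (\<lambda>x. f x + g x) = (\<lambda>x. kernel_app S P f x + kernel_app S P g x)"
  unfolding kernel_app_def by (simp add: algebra_simps sum.distrib)

lemma kernel_app_scale: "kernel_app S P (\<lambda>x. c * f x) = (\<lambda>x. c * kernel_app S P f x)"
  unfolding kernel_app_def by (simp add: algebra_simps sum_distrib_left)

lemma linear_plus_quadratic_nonpos_imp_zero:
  fixes a b :: real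
  assumes "\<And>t. t * a + t\<^sup>2 * b \<le> 0"
  shows "a = 0"
proof (rule ccontr)
  assume a: "a \<noteq> 0"
  define c where "c = \<bar>b\<bar> + 1"
  have c: "c > 0" "c + b \<ge> 1" unfolding c_def by auto
  have "(a / c) * a + (a / c)\<^sup>2 * b = a\<^sup>2 * (c + b) / c\<^sup>2"
    using c by (simp add: field_simps power2_eq_square)
  also have "\<dots> > 0" using a c by (intro divide_pos_pos mult_pos_pos) auto
  finally show False using assms[of "a / c"] by simp
qed

lemma abs_le_1_plus_square: "\<bar>t::real\<bar> \<le> 1 + t\<^sup>2"
proof (cases "\<bar>t\<bar> \<le> 1")
  case False
  then have "\<bar>t\<bar> * 1 \<le> \<bar>t\<bar> * \<bar>t\<bar>" by (intro mult_left_mono) auto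
  then show ?thesis by (simp add: power2_eq_square abs_mult_self_eq)
qed (simp add: add_increasing2)

locale reversible_chain =
  fixes S :: "'a set" and w :: "'a \<Rightarrow> real" and P :: "'a \<Rightarrow> 'a \<Rightarrow> real"
  assumes finite_states: "finite S"
    and weight_pos: "\<And>x. x \<in> S \<Longrightarrow> 0 < w x"
    and kernel_nonneg: "\<And>x y. x \<in> S \<Longrightarrow> y \<in> S \<Longrightarrow> 0 \<le> P x y"
    and row_sum: "\<And>x. x \<in> S \<Longrightarrow> (\<Sum>y\<in>S. P x y) = 1"
    and detailed_balance: "\<And>x y. x \<in> S \<Longrightarrow> y \<in> S \<Longrightarrow> w x * P x y = w y * P y x"
begin

abbreviation ip :: "('a \<Rightarrow> real) \<Rightarrow> ('a \<Rightarrow> real) \<Rightarrow> real" where "ip \<equiv> inner_on S w"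
abbreviation Pf :: "('a \<Rightarrow> real) \<Rightarrow> 'a \<Rightarrow> real" where "Pf \<equiv> kernel_app S P"
abbreviation dirichlet :: "('a \<Rightarrow> real) \<Rightarrow> real" where "dirichlet \<equiv> dirichlet_form S w P"
abbreviation harmonic :: "('a \<Rightarrow> real) set" where "harmonic \<equiv> harmonic_on S P"

lemma ip_self_eq_0_iff: "ip f f = 0 \<longleftrightarrow> (\<forall>x\<in>S. f x = 0)"
  using inner_on_self_eq_0_iff finite_states weight_pos by blast

lemma ip_self_pos_iff: "0 < ip f f \<longleftrightarrow> (\<exists>x\<in>S. f x \<noteq> 0)"
  using inner_on_self_pos_iff finite_states weight_pos by blast

lemma ip_self_nonneg: "0 \<le> ip f f"
  using inner_on_self_nonneg weight_pos by blast

lemma kernel_self_adjoint: "ip (Pf f) g = ip f (Pf g)"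
proof -
  have "ip (Pf f) g = (\<Sum>x\<in>S. \<Sum>y\<in>S. w x * P x y * f y * g x)"
    unfolding inner_on_def kernel_app_def by (simp add: sum_distrib_left sum_distrib_right mult_ac)
  also have "\<dots> = (\<Sum>x\<in>S. \<Sum>y\<in>S. w y * P y x * f y * g x)"
    by (intro sum.cong refl) (simp add: detailed_balance)
  also have "\<dots> = (\<Sum>y\<in>S. \<Sum>x\<in>S. w y * P y x * f y * g x)"
    by (rule sum.swap)
  also have "\<dots> = ip f (Pf g)"
    unfolding inner_on_def kernel_app_def by (simp add: sum_distrib_left sum_distrib_right mult_ac)
  finally show ?thesis .
qed

lemma ip_kernel_harmonic: "h \<in> harmonic \<Longrightarrow> ip (Pf f) h = ip f h"
  unfolding kernel_self_adjoint harmonic_on_def by (rule inner_on_cong) auto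

lemma dirichlet_eq_sum_squares:
  "dirichlet f = (\<Sum>x\<in>S. \<Sum>y\<in>S. w x * P x y * (f x - f y)\<^sup>2) / 2"
proof -
  have left: "(\<Sum>x\<in>S. \<Sum>y\<in>S. w x * P x y * (f x)\<^sup>2) = ip f f"
    unfolding inner_on_def
    by (intro sum.cong refl)
      (simp add: sum_distrib_left[symmetric] sum_distrib_right[symmetric] row_sum power2_eq_square mult_ac)
  have "(\<Sum>x\<in>S. \<Sum>y\<in>S. w x * P x y * (f y)\<^sup>2) = (\<Sum>x\<in>S. \<Sum>y\<in>S. w y * P y x * (f y)\<^sup>2)"
    by (intro sum.cong refl) (simp add: detailed_balance)
  also have "\<dots> = (\<Sum>y\<in>S. \<Sum>x\<in>S. w y * P y x * (f y)\<^sup>2)" by (rule sum.swap)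
  also have "\<dots> = ip f f"
    unfolding inner_on_def
    by (intro sum.cong refl)
      (simp add: sum_distrib_left[symmetric] sum_distrib_right[symmetric] row_sum power2_eq_square mult_ac)
  finally have right: "(\<Sum>x\<in>S. \<Sum>y\<in>S. w x * P x y * (f y)\<^sup>2) = ip f f" .
  have mixed: "(\<Sum>x\<in>S. \<Sum>y\<in>S. w x * P x y * (f x * f y)) = ip f (Pf f)"
    unfolding inner_on_def kernel_app_def by (simp add: sum_distrib_left mult_ac)
  have "(\<Sum>x\<in>S. \<Sum>y\<in>S. w x * P x y * (f x - f y)\<^sup>2)
     = (\<Sum>x\<in>S. \<Sum>y\<in>S. w x * P x y * (f x)\<^sup>2) + (\<Sum>x\<in>S. \<Sum>y\<in>S. w x * P x y * (f y)\<^sup>2)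
       - 2 * (\<Sum>x\<in>S. \<Sum>y\<in>S. w x * P x y * (f x * f y))"
    by (simp add: sum.distrib[symmetric] sum_subtractf[symmetric] sum_distrib_left power2_diff algebra_simps)
  then show ?thesis unfolding dirichlet_form_def using left right mixed by simp
qed

lemma dirichlet_nonneg: "0 \<le> dirichlet f"
  unfolding dirichlet_eq_sum_squares
  by (intro divide_nonneg_pos sum_nonneg mult_nonneg_nonneg)
    (auto simp: kernel_nonneg less_imp_le weight_pos)

lemma dirichlet_eq_0_iff: "dirichlet f = 0 \<longleftrightarrow> f \<in> harmonic"
proof
  assume "dirichlet f = 0"
  then have sum0: "(\<Sum>x\<in>S. \<Sum>y\<in>S. w x * P x y * (f x - f y)\<^sup>2) = 0"
    by (simp add: dirichlet_eq_sum_squares)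
  have nonneg: "\<And>x y. x \<in> S \<Longrightarrow> y \<in> S \<Longrightarrow> 0 \<le> w x * P x y * (f x - f y)\<^sup>2"
    by (simp add: kernel_nonneg weight_pos less_imp_le)
  have "\<forall>x\<in>S. \<forall>y\<in>S. w x * P x y * (f x - f y)\<^sup>2 = 0"
    using sum0 finite_states nonneg by (simp add: sum_nonneg_eq_0_iff sum_nonneg)
  then have const: "P x y = 0 \<or> f x = f y" if "x \<in> S" "y \<in> S" for x y
    using that weight_pos[of x] by auto
  show "f \<in> harmonic"
    unfolding harmonic_on_def
  proof (intro CollectI ballI)
    fix x assume x: "x \<in> S"
    have "Pf f x = (\<Sum>y\<in>S. P x y * f x)"
      unfolding kernel_app_def by (intro sum.cong refl) (metis const[OF x] mult_zero_left)
    also have "\<dots> = f x" using row_sum[OF x] by (simp add: sum_distrib_right[symmetric])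
    finally show "Pf f x = f x" .
  qed
next
  assume "f \<in> harmonic"
  then have "ip f (Pf f) = ip f f" unfolding harmonic_on_def by (intro inner_on_cong) auto
  then show "dirichlet f = 0" by (simp add: dirichlet_form_def)
qed

lemma ip_normalize:
  assumes "0 < ip f f"
  shows "ip (\<lambda>x. inverse (sqrt (ip f f)) * f x) (\<lambda>x. inverse (sqrt (ip f f)) * f x) = 1"
proof -
  have "inverse (sqrt (ip f f)) * inverse (sqrt (ip f f)) * ip f f = 1"
    using assms by (simp flip: power2_eq_square add: power_inverse)
  then show ?thesis by (simp add: inner_on_scale_left inner_on_scale_right)
qed

lemma compact_orthogonal_unit_sphere:
  "compact {f. (\<forall>x. x \<notin> S \<longrightarrow> f x = 0) \<and> ip f f = 1 \<and> (\<forall>n\<in>N. ip f n = 0)}"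
  (is "compact ?K")
proof -
  define M where "M = 1 + (\<Sum>x\<in>S. 1 / w x)"
  define B where "B = PiE UNIV (\<lambda>x. if x \<in> S then {-M..M} else {0::real})"
  have "compactin (product_topology (\<lambda>_. euclidean) UNIV) B"
    unfolding B_def by (subst compactin_PiE) auto
  then have "compact B" by (simp add: euclidean_product_topology)
  have "?K \<subseteq> B"
  proof
    fix f assume f: "f \<in> ?K"
    have "\<bar>f x\<bar> \<le> M" if x: "x \<in> S" for x
    proof -
      have "w x * f x * f x \<le> ip f f"
        unfolding inner_on_def using finite_states x
        by (intro member_le_sum) (auto simp: mult.assoc less_imp_le weight_pos)
      then have "(f x)\<^sup>2 \<le> 1 / w x"
        using f weight_pos[OF x] by (simp add: field_simps power2_eq_square)
      also have "\<dots> \<le> (\<Sum>x\<in>S. 1 / w x)"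
        using finite_states x by (intro member_le_sum) (auto simp: less_imp_le weight_pos)
      finally show ?thesis using abs_le_1_plus_square[of "f x"] unfolding M_def by linarith
    qed
    then have "\<forall>x\<in>S. -M \<le> f x \<and> f x \<le> M" using abs_le_D1 abs_le_D2 by fastforce
    then show "f \<in> B" using f unfolding B_def by auto
  qed
  have cont_coord: "continuous_on UNIV (\<lambda>f::'a \<Rightarrow> real. f x)" for x
    by (rule continuous_on_product_coordinates)
  have "closed ?K"
  proof -
    have "?K = (\<Inter>x\<in>-S. {f. f x = 0}) \<inter> {f. ip f f = 1} \<inter> (\<Inter>n\<in>N. {f. ip f n = 0})"
      by auto
    moreover have "closed {f::'a \<Rightarrow> real. f x = 0}" for x
      by (intro closed_Collect_eq cont_coord continuous_on_const)
    moreover have "closed {f. ip f f = 1}" "closed {f. ip f n = 0}" for n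
      unfolding inner_on_def by (intro closed_Collect_eq continuous_intros cont_coord)+
    ultimately show ?thesis by (simp add: closed_INT closed_Int)
  qed
  with \<open>compact B\<close> \<open>?K \<subseteq> B\<close> show ?thesis
    using compact_Int_closed[of B ?K] by (simp add: Int_absorb1)
qed

lemma rayleigh_maximizer_exists:
  assumes f0: "\<forall>n\<in>N. ip f0 n = 0" "0 < ip f0 f0"
  obtains g where "\<forall>n\<in>N. ip g n = 0" "ip g g = 1"
    "\<And>f. \<forall>n\<in>N. ip f n = 0 \<Longrightarrow> ip f f = 1 \<Longrightarrow> ip f (Pf f) \<le> ip g (Pf g)"
proof -
  define K where "K = {f. (\<forall>x. x \<notin> S \<longrightarrow> f x = 0) \<and> ip f f = 1 \<and> (\<forall>n\<in>N. ip f n = 0)}"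
  define restrict where "restrict f = (\<lambda>x. if x \<in> S then f x else 0)" for f :: "'a \<Rightarrow> real"
  have restrict_ip: "ip (restrict f) g = ip f g" "ip g (restrict f) = ip g f" for f g
    unfolding restrict_def by (auto intro: inner_on_cong)
  have restrict_Pf: "Pf (restrict f) = Pf f" for f
    unfolding restrict_def kernel_app_def by (auto intro!: sum.cong)
  have restrict_K: "restrict f \<in> K" if "\<forall>n\<in>N. ip f n = 0" "ip f f = 1" for f
    using that unfolding K_def by (auto simp: restrict_ip) (simp add: restrict_def)
  have Q_cont: "continuous_on K (\<lambda>f. ip f (Pf f))"
    unfolding inner_on_def kernel_app_def
    by (intro continuous_intros continuous_on_subset[OF continuous_on_product_coordinates] subset_UNIV)
  have "K \<noteq> {}"
    using restrict_K[of "\<lambda>x. inverse (sqrt (ip f0 f0)) * f0 x"] f0 ip_normalize[OF f0(2)]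
    by (auto simp: inner_on_scale_left)
  moreover have "compact K" unfolding K_def by (rule compact_orthogonal_unit_sphere)
  ultimately obtain g where "g \<in> K" and g: "\<forall>f\<in>K. ip f (Pf f) \<le> ip g (Pf g)"
    using continuous_attains_sup Q_cont by blast
  show thesis
  proof
    show "\<forall>n\<in>N. ip g n = 0" "ip g g = 1" using \<open>g \<in> K\<close> by (auto simp: K_def)
    fix f assume "\<forall>n\<in>N. ip f n = 0" "ip f f = 1"
    then have "ip (restrict f) (Pf (restrict f)) \<le> ip g (Pf g)" using g restrict_K by blast
    then show "ip f (Pf f) \<le> ip g (Pf g)" by (simp add: restrict_Pf restrict_ip)
  qed
qed

lemma rayleigh_maximizer_bound:
  assumes g: "\<forall>n\<in>N. ip g n = 0" "ip g g = 1"
    and gmax: "\<And>f. \<forall>n\<in>N. ip f n = 0 \<Longrightarrow> ip f f = 1 \<Longrightarrow> ip f (Pf f) \<le> ip g (Pf g)"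
    and f: "\<forall>n\<in>N. ip f n = 0"
  shows "ip f (Pf f) \<le> ip g (Pf g) * ip f f"
proof (cases "ip f f = 0")
  case True
  then show ?thesis by (simp add: ip_self_eq_0_iff inner_on_zero_left)
next
  case False
  then have pos: "0 < ip f f" using ip_self_nonneg[of f] by linarith
  define c where "c = inverse (sqrt (ip f f))"
  have "c * c * ip f (Pf f) \<le> ip g (Pf g)"
    using gmax[of "\<lambda>x. c * f x"] f ip_normalize[OF pos]
    by (simp add: c_def inner_on_scale_left inner_on_scale_right kernel_app_scale mult.assoc)
  moreover have "c * c = inverse (ip f f)"
    using pos by (simp add: c_def flip: power2_eq_square add: power_inverse)
  ultimately show ?thesis using pos by (simp add: field_simps)
qed

text \<open>First-order optimality: perturbing a maximizer g by t v (v orthogonal to the harmonic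
  functions) cannot increase the Rayleigh quotient, so the linear term in t must vanish; hence
  P g - \<xi> g is orthogonal to all such v, in particular to itself.\<close>
lemma rayleigh_maximizer_eigenvector:
  assumes g: "\<forall>h\<in>harmonic. ip g h = 0" "ip g g = 1"
    and gmax: "\<And>f. \<forall>h\<in>harmonic. ip f h = 0 \<Longrightarrow> ip f f = 1 \<Longrightarrow> ip f (Pf f) \<le> ip g (Pf g)"
  shows "\<forall>x\<in>S. Pf g x = ip g (Pf g) * g x"
proof -
  define \<xi> where "\<xi> = ip g (Pf g)"
  have bound: "ip f (Pf f) \<le> \<xi> * ip f f" if "\<forall>h\<in>harmonic. ip f h = 0" for f
    using rayleigh_maximizer_bound[OF g gmax that] by (simp add: \<xi>_def)
  have orth: "ip v (Pf g) - \<xi> * ip v g = 0" if v: "\<forall>h\<in>harmonic. ip v h = 0" for v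
  proof -
    have "2 * (ip v (Pf g) - \<xi> * ip v g) = 0"
    proof (rule linear_plus_quadratic_nonpos_imp_zero)
      fix t :: real
      define f where "f = (\<lambda>x. g x + t * v x)"
      have "\<forall>h\<in>harmonic. ip f h = 0"
        using g v by (simp add: f_def inner_on_add_left inner_on_scale_left)
      then have "ip f (Pf f) \<le> \<xi> * ip f f" by (rule bound)
      moreover have "ip g (Pf v) = ip v (Pf g)" by (metis kernel_self_adjoint inner_on_commute)
      ultimately show "t * (2 * (ip v (Pf g) - \<xi> * ip v g)) + t\<^sup>2 * (ip v (Pf v) - \<xi> * ip v v) \<le> 0"
        using g(2)
        unfolding f_def kernel_app_add kernel_app_scale \<xi>_def inner_on_add_left inner_on_add_right
          inner_on_scale_left inner_on_scale_right
        by (simp add: power2_eq_square algebra_simps inner_on_commute[of S w g v])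
    qed
    then show ?thesis by simp
  qed
  define v where "v = (\<lambda>x. Pf g x - \<xi> * g x)"
  have "\<forall>h\<in>harmonic. ip v h = 0"
    using g by (simp add: v_def inner_on_diff_left inner_on_scale_left ip_kernel_harmonic)
  then have "ip v v = 0"
    using orth by (simp add: v_def inner_on_diff_right inner_on_scale_right)
  then show ?thesis unfolding \<xi>_def[symmetric] by (simp add: ip_self_eq_0_iff v_def)
qed

lemma eigenvalue_on_real:
  assumes "eigenvalue_on S P z"
  obtains r h where "z = complex_of_real r" "0 < ip h h" "\<forall>x\<in>S. Pf h x = r * h x"
proof -
  from assms obtain f :: "'a \<Rightarrow> complex" where f0: "\<exists>y\<in>S. f y \<noteq> 0"
    and f: "\<forall>x\<in>S. (\<Sum>y\<in>S. complex_of_real (P x y) * f y) = z * f x"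
    unfolding eigenvalue_on_def by blast
  define a where "a = Re z"
  define b where "b = Im z"
  define fr where "fr = (\<lambda>x. Re (f x))"
  define fi where "fi = (\<lambda>x. Im (f x))"
  have re: "Pf fr x = a * fr x - b * fi x" and im: "Pf fi x = a * fi x + b * fr x" if "x \<in> S" for x
  proof -
    have "Re (\<Sum>y\<in>S. complex_of_real (P x y) * f y) = Re (z * f x)"
      "Im (\<Sum>y\<in>S. complex_of_real (P x y) * f y) = Im (z * f x)"
      using f that by simp_all
    then show "Pf fr x = a * fr x - b * fi x" "Pf fi x = a * fi x + b * fr x"
      unfolding kernel_app_def fr_def fi_def a_def b_def by (simp_all add: Re_sum Im_sum algebra_simps)
  qed
  have pos: "0 < ip fr fr + ip fi fi"
  proof -
    from f0 obtain y where "y \<in> S" "fr y \<noteq> 0 \<or> fi y \<noteq> 0"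
      unfolding fr_def fi_def using complex_eqI by force
    then have "0 < ip fr fr \<or> 0 < ip fi fi" using ip_self_pos_iff by blast
    then show ?thesis using ip_self_nonneg[of fr] ip_self_nonneg[of fi] by linarith
  qed
  have "ip fi (Pf fr) = a * ip fi fr - b * ip fi fi"
    using re by (simp add: inner_on_cong[of S _ fi "Pf fr"] inner_on_diff_right inner_on_scale_right)
  moreover have "ip fr (Pf fi) = a * ip fr fi + b * ip fr fr"
    using im by (simp add: inner_on_cong[of S _ fr "Pf fi"] inner_on_add_right inner_on_scale_right)
  moreover have "ip fi (Pf fr) = ip fr (Pf fi)"
    by (metis kernel_self_adjoint inner_on_commute)
  ultimately have "b * (ip fr fr + ip fi fi) = 0"
    by (simp add: algebra_simps inner_on_commute[of S w fi fr])
  with pos have "b = 0" by simp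
  then have z: "z = complex_of_real a" by (simp add: a_def b_def complex_eq_iff)
  show thesis
  proof (cases "0 < ip fr fr")
    case True
    then show thesis using that z re \<open>b = 0\<close> by auto
  next
    case False
    then have "0 < ip fi fi" using pos ip_self_nonneg[of fr] by linarith
    then show thesis using that z im \<open>b = 0\<close> by auto
  qed
qed

lemma eigenvalue_on_of_real:
  assumes "0 < ip h h" "\<forall>x\<in>S. Pf h x = r * h x"
  shows "eigenvalue_on S P (complex_of_real r)"
  unfolding eigenvalue_on_def
proof (intro exI[of _ "\<lambda>x. complex_of_real (h x)"] conjI ballI)
  show "\<exists>y\<in>S. complex_of_real (h y) \<noteq> 0" using assms(1) ip_self_pos_iff by auto
  fix x assume "x \<in> S"
  have "(\<Sum>y\<in>S. complex_of_real (P x y) * complex_of_real (h y)) = complex_of_real (Pf h x)"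
    unfolding kernel_app_def by simp
  then show "(\<Sum>y\<in>S. complex_of_real (P x y) * complex_of_real (h y)) = complex_of_real r * complex_of_real (h x)"
    using assms(2) \<open>x \<in> S\<close> by simp
qed

lemma eigenvectors_orthogonal:
  assumes "\<forall>x\<in>S. Pf u x = r * u x" "\<forall>x\<in>S. Pf v x = s * v x" "r \<noteq> s"
  shows "ip u v = 0"
proof -
  have "ip (Pf u) v = r * ip u v"
    using inner_on_cong[of S "Pf u" "\<lambda>x. r * u x" v v w] assms(1) by (simp add: inner_on_scale_left)
  moreover have "ip u (Pf v) = s * ip u v"
    using inner_on_cong[of S u u "Pf v" "\<lambda>x. s * v x" w] assms(2) by (simp add: inner_on_scale_right)
  ultimately have "r * ip u v = s * ip u v" using kernel_self_adjoint[of u v] by argo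
  then show ?thesis using assms(3) by simp
qed

lemma bessel_inequality:
  assumes "finite X"
    and orthonormal: "\<And>r s. r \<in> X \<Longrightarrow> s \<in> X \<Longrightarrow> ip (u r) (u s) = (if r = s then 1 else 0)"
  shows "(\<Sum>r\<in>X. (ip f (u r))\<^sup>2) \<le> ip f f"
proof -
  define c where "c r = ip f (u r)" for r
  define U where "U = (\<lambda>y. \<Sum>r\<in>X. c r * u r y)"
  have U_u: "ip (u r) U = c r" if "r \<in> X" for r
  proof -
    have "ip U (u r) = (\<Sum>s\<in>X. c s * ip (u s) (u r))"
      unfolding U_def by (rule inner_on_sum_left)
    also have "\<dots> = (\<Sum>s\<in>X. if s = r then c s else 0)"
      using that by (intro sum.cong refl) (simp add: orthonormal)
    finally show ?thesis using \<open>finite X\<close> that by (simp add: inner_on_commute)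
  qed
  have "ip U U = (\<Sum>r\<in>X. c r * ip (u r) U)"
    unfolding U_def by (rule inner_on_sum_left)
  then have UU: "ip U U = (\<Sum>r\<in>X. (c r)\<^sup>2)"
    using U_u by (simp add: power2_eq_square)
  have "ip U f = (\<Sum>r\<in>X. c r * ip (u r) f)"
    unfolding U_def by (rule inner_on_sum_left)
  then have fU: "ip f U = (\<Sum>r\<in>X. (c r)\<^sup>2)"
    by (simp add: c_def inner_on_commute power2_eq_square)
  have "0 \<le> ip (\<lambda>x. f x - U x) (\<lambda>x. f x - U x)" by (rule ip_self_nonneg)
  also have "\<dots> = ip f f - 2 * ip f U + ip U U"
    unfolding inner_on_diff_left inner_on_diff_right by (simp add: inner_on_commute[of S w U f])
  finally show ?thesis using UU fU by (simp add: c_def)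
qed

definition real_eigenvalues :: "real set" where
  "real_eigenvalues = {r. \<exists>h. 0 < ip h h \<and> (\<forall>x\<in>S. Pf h x = r * h x)}"

text \<open>Normalised eigenvectors for distinct eigenvalues are orthonormal, and Bessel's inequality
  for the point masses bounds their number by the number of states.\<close>
lemma card_real_eigenvalues_le:
  assumes X: "finite X" "X \<subseteq> real_eigenvalues"
  shows "card X \<le> card S"
proof -
  have "\<forall>r\<in>X. \<exists>h. 0 < ip h h \<and> (\<forall>x\<in>S. Pf h x = r * h x)"
    using X(2) unfolding real_eigenvalues_def by blast
  then obtain h where h: "\<And>r. r \<in> X \<Longrightarrow> 0 < ip (h r) (h r) \<and> (\<forall>x\<in>S. Pf (h r) x = r * h r x)"
    by metis
  define u where "u r = (\<lambda>x. inverse (sqrt (ip (h r) (h r))) * h r x)" for r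
  have u_unit: "ip (u r) (u r) = 1" if "r \<in> X" for r
    unfolding u_def using h[OF that] by (simp add: ip_normalize)
  have u_eig: "\<forall>x\<in>S. Pf (u r) x = r * u r x" if "r \<in> X" for r
    using h[OF that] unfolding u_def kernel_app_scale by simp
  have orthonormal: "ip (u r) (u s) = (if r = s then 1 else 0)" if "r \<in> X" "s \<in> X" for r s
    using u_unit eigenvectors_orthogonal[OF u_eig[OF that(1)] u_eig[OF that(2)]] that by auto
  have pointwise: "(\<Sum>r\<in>X. w x * (u r x)\<^sup>2) \<le> 1" if x: "x \<in> S" for x
  proof -
    define \<delta> where "\<delta> = (\<lambda>y. if y = x then 1 else (0::real))"
    have "(\<Sum>r\<in>X. (ip \<delta> (u r))\<^sup>2) \<le> ip \<delta> \<delta>"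
      by (rule bessel_inequality[OF X(1) orthonormal])
    then have "w x * (\<Sum>r\<in>X. w x * (u r x)\<^sup>2) \<le> w x * 1"
      using finite_states x
      by (simp add: \<delta>_def inner_on_indicator_left sum_distrib_left power2_eq_square mult_ac)
    then show ?thesis using weight_pos[OF x] by simp
  qed
  have "real (card X) = (\<Sum>r\<in>X. ip (u r) (u r))" using u_unit by simp
  also have "\<dots> = (\<Sum>x\<in>S. \<Sum>r\<in>X. w x * (u r x)\<^sup>2)"
    unfolding inner_on_def by (subst sum.swap) (simp add: power2_eq_square mult_ac)
  also have "\<dots> \<le> real (card S)" using sum_mono[OF pointwise] by simp
  finally show ?thesis by simp
qed

lemma finite_real_eigenvalues: "finite real_eigenvalues"
proof (rule ccontr)
  assume "infinite real_eigenvalues"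
  then obtain X where "X \<subseteq> real_eigenvalues" "finite X" "card X = Suc (card S)"
    using infinite_arbitrarily_large by blast
  then show False using card_real_eigenvalues_le by fastforce
qed

lemma eigenvector_orthogonal_harmonic:
  assumes "\<forall>x\<in>S. Pf f x = r * f x" "r \<noteq> 1" "h \<in> harmonic"
  shows "ip f h = 0"
proof -
  have "r * ip f h = ip f h"
    using inner_on_cong[of S "Pf f" "\<lambda>x. r * f x" h h w] assms(1) ip_kernel_harmonic[OF assms(3), of f]
    by (simp add: inner_on_scale_left)
  then show ?thesis using assms(2) by (metis mult_cancel_right2)
qed

lemma finite_nontrivial_eigenvalue_moduli: "finite {cmod z | z. eigenvalue_on S P z \<and> z \<noteq> 1}"
proof (rule finite_subset[OF _ finite_imageI[OF finite_real_eigenvalues, of abs]])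
  show "{cmod z | z. eigenvalue_on S P z \<and> z \<noteq> 1} \<subseteq> abs ` real_eigenvalues"
  proof clarify
    fix z assume "eigenvalue_on S P z"
    then obtain r h where "z = complex_of_real r" "0 < ip h h" "\<forall>x\<in>S. Pf h x = r * h x"
      by (blast elim: eigenvalue_on_real)
    then show "cmod z \<in> abs ` real_eigenvalues"
      unfolding real_eigenvalues_def by (auto intro: image_eqI[of _ abs r])
  qed
qed

lemma nontrivial_eigenvalue_cmod_le:
  assumes psd: "\<And>f. 0 \<le> ip f (Pf f)"
    and bound: "\<And>f. \<forall>h\<in>harmonic. ip f h = 0 \<Longrightarrow> ip f (Pf f) \<le> \<xi> * ip f f"
    and z: "eigenvalue_on S P z" "z \<noteq> 1"
  shows "cmod z \<le> \<xi>"
proof -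
  obtain r h where rh: "z = complex_of_real r" "0 < ip h h" "\<forall>x\<in>S. Pf h x = r * h x"
    using z(1) by (blast elim: eigenvalue_on_real)
  have Qh: "ip h (Pf h) = r * ip h h"
    using inner_on_cong[of S h h "Pf h" "\<lambda>x. r * h x" w] rh(3) by (simp add: inner_on_scale_right)
  have "r \<noteq> 1" using rh(1) z(2) by auto
  then have "r * ip h h \<le> \<xi> * ip h h"
    using bound[of h] eigenvector_orthogonal_harmonic[OF rh(3)] Qh by simp
  moreover have "0 \<le> r" using psd[of h] Qh rh(2) by (simp add: zero_le_mult_iff)
  ultimately show ?thesis using rh(1,2) by simp
qed

lemma orthogonal_to_harmonic_nonzero:
  assumes "x0 \<in> S" "P x0 x0 \<noteq> 1"
  obtains f where "\<forall>h\<in>harmonic. ip f h = 0" "0 < ip f f"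
proof -
  define \<delta> where "\<delta> = (\<lambda>y. if y = x0 then 1 else 0::real)"
  have "Pf \<delta> x0 = P x0 x0"
    unfolding kernel_app_def \<delta>_def using assms(1) finite_states by (simp add: if_distrib cong: if_cong)
  then have "0 < ip (\<lambda>y. Pf \<delta> y - \<delta> y) (\<lambda>y. Pf \<delta> y - \<delta> y)"
    using assms ip_self_pos_iff by (auto simp: \<delta>_def)
  moreover have "\<forall>h\<in>harmonic. ip (\<lambda>y. Pf \<delta> y - \<delta> y) h = 0"
    by (simp add: inner_on_diff_left ip_kernel_harmonic)
  ultimately show thesis using that by blast
qed

text \<open>Positive semidefiniteness makes the eigenvalues nonnegative, so their moduli are the
  eigenvalues themselves, and the Rayleigh maximizer realises the largest one.\<close>
lemma max_nontrivial_eigenvalue: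
  assumes psd: "\<And>f. 0 \<le> ip f (Pf f)" and x0: "x0 \<in> S" "P x0 x0 \<noteq> 1"
  obtains g where "\<forall>h\<in>harmonic. ip g h = 0" "ip g g = 1"
    "Max {cmod z | z. eigenvalue_on S P z \<and> z \<noteq> 1} = ip g (Pf g)"
    "\<And>f. \<forall>h\<in>harmonic. ip f h = 0 \<Longrightarrow> ip f (Pf f) \<le> ip g (Pf g) * ip f f"
proof -
  obtain g where g: "\<forall>h\<in>harmonic. ip g h = 0" "ip g g = 1"
    and gmax: "\<And>f. \<forall>h\<in>harmonic. ip f h = 0 \<Longrightarrow> ip f f = 1 \<Longrightarrow> ip f (Pf f) \<le> ip g (Pf g)"
    using orthogonal_to_harmonic_nonzero[OF x0] rayleigh_maximizer_exists by metis
  define \<xi> where "\<xi> = ip g (Pf g)"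
  have bound: "ip f (Pf f) \<le> \<xi> * ip f f" if "\<forall>h\<in>harmonic. ip f h = 0" for f
    unfolding \<xi>_def by (rule rayleigh_maximizer_bound[OF g gmax that])
  have eig: "\<forall>x\<in>S. Pf g x = \<xi> * g x"
    unfolding \<xi>_def by (rule rayleigh_maximizer_eigenvector[OF g gmax])
  have "\<xi> \<noteq> 1"
  proof
    assume "\<xi> = 1"
    then have "g \<in> harmonic" using eig by (simp add: harmonic_on_def)
    then show False using g by auto
  qed
  moreover have "eigenvalue_on S P (complex_of_real \<xi>)"
    using eigenvalue_on_of_real[OF _ eig] g(2) by simp
  moreover have "0 \<le> \<xi>" unfolding \<xi>_def by (rule psd)
  ultimately have "Max {cmod z | z. eigenvalue_on S P z \<and> z \<noteq> 1} = \<xi>"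
    using finite_nontrivial_eigenvalue_moduli nontrivial_eigenvalue_cmod_le[OF psd bound]
    by (intro Max_eqI) (auto intro!: exI[of _ "complex_of_real \<xi>"])
  then show thesis using that g bound unfolding \<xi>_def by (simp add: mult.commute)
qed

theorem spectral_gap_on_variational:
  assumes psd: "\<And>f. 0 \<le> ip f (Pf f)" and x0: "x0 \<in> S" "P x0 x0 \<noteq> 1"
  shows "\<And>f. \<forall>h\<in>harmonic. ip f h = 0 \<Longrightarrow> spectral_gap_on S P * ip f f \<le> dirichlet f"
    and "\<exists>f. (\<forall>h\<in>harmonic. ip f h = 0) \<and> 0 < ip f f \<and> dirichlet f = spectral_gap_on S P * ip f f"
proof -
  obtain g where g: "\<forall>h\<in>harmonic. ip g h = 0" "ip g g = 1"
    and max: "Max {cmod z | z. eigenvalue_on S P z \<and> z \<noteq> 1} = ip g (Pf g)"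
    and bound: "\<And>f. \<forall>h\<in>harmonic. ip f h = 0 \<Longrightarrow> ip f (Pf f) \<le> ip g (Pf g) * ip f f"
    using max_nontrivial_eigenvalue[OF psd x0] by blast
  have gap: "spectral_gap_on S P = 1 - ip g (Pf g)"
    unfolding spectral_gap_on_def max ..
  show "spectral_gap_on S P * ip f f \<le> dirichlet f" if "\<forall>h\<in>harmonic. ip f h = 0" for f
    using bound[OF that] unfolding gap dirichlet_form_def by (simp add: algebra_simps)
  show "\<exists>f. (\<forall>h\<in>harmonic. ip f h = 0) \<and> 0 < ip f f \<and> dirichlet f = spectral_gap_on S P * ip f f"
    using g unfolding gap dirichlet_form_def by auto
qed

end

lemma dirichlet_form_le_of_kernel_le:
  assumes "reversible_chain S w P1" "reversible_chain S w P2"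
    and "\<And>x y. x \<in> S \<Longrightarrow> y \<in> S \<Longrightarrow> x \<noteq> y \<Longrightarrow> c * P1 x y \<le> P2 x y"
  shows "c * dirichlet_form S w P1 f \<le> dirichlet_form S w P2 f"
proof -
  have "c * (w x * P1 x y * (f x - f y)\<^sup>2) \<le> w x * P2 x y * (f x - f y)\<^sup>2" if "x \<in> S" "y \<in> S" for x y
  proof (cases "x = y")
    case False
    then have "w x * (f x - f y)\<^sup>2 * (c * P1 x y) \<le> w x * (f x - f y)\<^sup>2 * P2 x y"
      using assms(3) that reversible_chain.weight_pos[OF assms(1), of x] by (intro mult_left_mono) auto
    then show ?thesis by (simp add: mult_ac)
  qed simp
  then have "c * (\<Sum>x\<in>S. \<Sum>y\<in>S. w x * P1 x y * (f x - f y)\<^sup>2) \<le> (\<Sum>x\<in>S. \<Sum>y\<in>S. w x * P2 x y * (f x - f y)\<^sup>2)"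
    unfolding sum_distrib_left by (intro sum_mono) auto
  then show ?thesis
    unfolding reversible_chain.dirichlet_eq_sum_squares[OF assms(1)]
      reversible_chain.dirichlet_eq_sum_squares[OF assms(2)] by simp
qed

lemma harmonic_on_subset_of_dirichlet_le:
  assumes "reversible_chain S w P1" "reversible_chain S w P2" "0 < c"
    and "\<And>f. c * dirichlet_form S w P1 f \<le> dirichlet_form S w P2 f"
  shows "harmonic_on S P2 \<subseteq> harmonic_on S P1"
proof
  fix h assume "h \<in> harmonic_on S P2"
  then have "dirichlet_form S w P2 h = 0"
    using reversible_chain.dirichlet_eq_0_iff[OF assms(2)] by blast
  then have "c * dirichlet_form S w P1 h \<le> 0"
    using assms(4)[of h] by simp
  then have "dirichlet_form S w P1 h = 0"
    using reversible_chain.dirichlet_nonneg[OF assms(1), of h] assms(3) by (simp add: mult_le_0_iff)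
  then show "h \<in> harmonic_on S P1" using reversible_chain.dirichlet_eq_0_iff[OF assms(1)] by blast
qed

lemma spectral_gap_on_le_of_dirichlet_le:
  assumes "reversible_chain S w P1" "reversible_chain S w P2"
    and psd1: "\<And>f. 0 \<le> inner_on S w f (kernel_app S P1 f)"
    and psd2: "\<And>f. 0 \<le> inner_on S w f (kernel_app S P2 f)"
    and x1: "x1 \<in> S" "P1 x1 x1 \<noteq> 1" and x2: "x2 \<in> S" "P2 x2 x2 \<noteq> 1"
    and harmonic: "harmonic_on S P1 = harmonic_on S P2"
    and "0 \<le> c" and dirichlet_le: "\<And>f. c * dirichlet_form S w P1 f \<le> dirichlet_form S w P2 f"
  shows "c * spectral_gap_on S P1 \<le> spectral_gap_on S P2"
proof -
  obtain f where f: "\<forall>h\<in>harmonic_on S P2. inner_on S w f h = 0" "0 < inner_on S w f f"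
    and gap2: "dirichlet_form S w P2 f = spectral_gap_on S P2 * inner_on S w f f"
    using reversible_chain.spectral_gap_on_variational(2)[OF assms(2) psd2 x2] by blast
  have "c * (spectral_gap_on S P1 * inner_on S w f f) \<le> c * dirichlet_form S w P1 f"
    using reversible_chain.spectral_gap_on_variational(1)[OF assms(1) psd1 x1] f(1) harmonic \<open>0 \<le> c\<close>
    by (simp add: mult_left_mono)
  also have "\<dots> \<le> spectral_gap_on S P2 * inner_on S w f f"
    using dirichlet_le[of f] gap2 by simp
  finally show ?thesis using f(2) by (simp add: mult.assoc)
qed

section \<open>Single-edge update kernels\<close>

definition flip_kernel :: "'e \<Rightarrow> real \<Rightarrow> 'e set \<Rightarrow> 'e set \<Rightarrow> real" where
  "flip_kernel e a A B = (if B = insert e A then a else 0) + (if B = A - {e} then 1 - a else 0)"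

lemma flip_kernel_nonneg: "0 \<le> a \<Longrightarrow> a \<le> 1 \<Longrightarrow> 0 \<le> flip_kernel e a A B"
  unfolding flip_kernel_def by auto

lemma flip_kernel_empty: "flip_kernel e a {} {} = 1 - a"
  unfolding flip_kernel_def by auto

lemma flip_kernel_offdiag:
  "A \<noteq> B \<Longrightarrow> flip_kernel e a A B =
     (if B = insert e A then a else if B = A - {e} then 1 - a else 0)"
  unfolding flip_kernel_def by auto

lemma flip_kernel_sum:
  assumes "finite E" "A \<subseteq> E" "e \<in> E"
  shows "(\<Sum>B\<in>Pow E. flip_kernel e a A B * f B) = a * f (insert e A) + (1 - a) * f (A - {e})"
proof -
  have "insert e A \<in> Pow E" "A - {e} \<in> Pow E" using assms by auto
  then show ?thesis
    using assms(1) unfolding flip_kernel_def distrib_right sum.distrib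
    by (simp add: if_distrib if_distribR cong: if_cong)
qed

lemma flip_kernel_reversible:
  assumes balance: "\<And>D. D \<subseteq> E \<Longrightarrow> e \<notin> D \<Longrightarrow> \<pi> (insert e D) * (1 - a (insert e D)) = \<pi> D * a D"
    and "A \<subseteq> E" "B \<subseteq> E"
  shows "\<pi> A * flip_kernel e (a A) A B = \<pi> B * flip_kernel e (a B) B A"
proof -
  consider "A = B" | "B = insert e A" "e \<notin> A" | "A = insert e B" "e \<notin> B"
    | "A \<noteq> B" "\<not> (B = insert e A \<and> e \<notin> A)" "\<not> (A = insert e B \<and> e \<notin> B)"
    by blast
  then show ?thesis
  proof cases
    case 2
    then show ?thesis using balance[of A] assms(2) by (auto simp: flip_kernel_def)
  next
    case 3
    then show ?thesis using balance[of B] assms(3) by (auto simp: flip_kernel_def)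
  next
    case 4
    then show ?thesis by (auto simp: flip_kernel_offdiag)
  qed simp
qed

lemma flip_kernel_offdiag_le:
  assumes "A \<noteq> B" "e \<notin> A \<Longrightarrow> c * a \<le> b" "e \<in> A \<Longrightarrow> c * (1 - a) \<le> 1 - b"
  shows "c * flip_kernel e a A B \<le> flip_kernel e b A B"
  using assms by (auto simp: flip_kernel_offdiag)

text \<open>Pairing each D not containing e with insert e D, the quadratic form of a heat-bath
  update at e becomes a sum of squares.\<close>
lemma flip_kernel_quadratic_nonneg:
  assumes "finite E" "e \<in> E"
    and \<pi>_nonneg: "\<And>D. 0 \<le> \<pi> D" and a_lt_1: "\<And>D. a D < 1"
    and a_insert: "\<And>D. D \<subseteq> E \<Longrightarrow> e \<notin> D \<Longrightarrow> a (insert e D) = a D"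
    and balance: "\<And>D. D \<subseteq> E \<Longrightarrow> e \<notin> D \<Longrightarrow> \<pi> (insert e D) * (1 - a D) = \<pi> D * a D"
  shows "0 \<le> (\<Sum>A\<in>Pow E. \<pi> A * f A * (\<Sum>B\<in>Pow E. flip_kernel e (a A) A B * f B))"
proof -
  define E0 where "E0 = E - {e}"
  define M where "M D = a D * f (insert e D) + (1 - a D) * f D" for D
  have E0: "E = insert e E0" "finite E0" "e \<notin> E0" using assms(1,2) by (auto simp: E0_def)
  have "(\<Sum>B\<in>Pow E. flip_kernel e (a A) A B * f B) = M (A - {e})" if "A \<in> Pow E" for A
  proof -
    have "a A = a (A - {e})"
      using a_insert[of "A - {e}"] that by (cases "e \<in> A") (auto simp: insert_absorb)
    then show ?thesis
      using flip_kernel_sum[OF assms(1) _ assms(2)] that by (simp add: M_def)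
  qed
  then have "(\<Sum>A\<in>Pow E. \<pi> A * f A * (\<Sum>B\<in>Pow E. flip_kernel e (a A) A B * f B))
      = (\<Sum>A\<in>Pow E0. \<pi> A * f A * M (A - {e})) + (\<Sum>A\<in>insert e ` Pow E0. \<pi> A * f A * M (A - {e}))"
    unfolding E0(1) Pow_insert using E0(2,3) by (subst sum.union_disjoint) auto
  also have "(\<Sum>A\<in>insert e ` Pow E0. \<pi> A * f A * M (A - {e}))
      = (\<Sum>D\<in>Pow E0. \<pi> (insert e D) * f (insert e D) * M D)"
  proof -
    have "inj_on (insert e) (Pow E0)" using E0(3) by (auto intro!: inj_onI simp: subset_iff)
    moreover have "insert e D - {e} = D" if "D \<in> Pow E0" for D
      using E0(3) that by (auto simp: Diff_insert_absorb)
    ultimately show ?thesis by (simp add: sum.reindex)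
  qed
  also have "(\<Sum>A\<in>Pow E0. \<pi> A * f A * M (A - {e})) + \<dots> = (\<Sum>D\<in>Pow E0. \<pi> D / (1 - a D) * (M D)\<^sup>2)"
    unfolding sum.distrib[symmetric]
  proof (intro sum.cong refl)
    fix D assume "D \<in> Pow E0"
    then have D: "D \<subseteq> E" "e \<notin> D" using E0 by auto
    have ins: "\<pi> (insert e D) = \<pi> D * a D / (1 - a D)"
      using balance[OF D] a_lt_1[of D] by (simp add: field_simps)
    have "D - {e} = D" using D(2) by simp
    then show "\<pi> D * f D * M (D - {e}) + \<pi> (insert e D) * f (insert e D) * M D = \<pi> D / (1 - a D) * (M D)\<^sup>2"
      unfolding ins using a_lt_1[of D] by (simp add: M_def field_simps power2_eq_square)
  qed
  also have "0 \<le> \<dots>"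
    using \<pi>_nonneg a_lt_1 by (intro sum_nonneg mult_nonneg_nonneg divide_nonneg_pos) (auto simp: less_imp_le)
  finally show ?thesis by simp
qed

lemma reversible_chain_flip_average:
  assumes "finite E" "E \<noteq> {}"
    and \<pi>_pos: "\<And>D. 0 < \<pi> D"
    and a_range: "\<And>e D. e \<in> E \<Longrightarrow> 0 \<le> a e D \<and> a e D \<le> 1"
    and balance: "\<And>e D. e \<in> E \<Longrightarrow> D \<subseteq> E \<Longrightarrow> e \<notin> D \<Longrightarrow>
      \<pi> (insert e D) * (1 - a e (insert e D)) = \<pi> D * a e D"
  shows "reversible_chain (Pow E) \<pi> (\<lambda>A B. (\<Sum>e\<in>E. flip_kernel e (a e A) A B) / real (card E))"
proof
  have card: "0 < real (card E)" using assms(1,2) by (simp add: card_gt_0_iff)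
  show "finite (Pow E)" using assms(1) by simp
  show "0 < \<pi> A" for A by (rule \<pi>_pos)
  show "0 \<le> (\<Sum>e\<in>E. flip_kernel e (a e A) A B) / real (card E)" for A B
    using a_range card by (intro divide_nonneg_pos sum_nonneg flip_kernel_nonneg) auto
  show "(\<Sum>B\<in>Pow E. (\<Sum>e\<in>E. flip_kernel e (a e A) A B) / real (card E)) = 1" if "A \<in> Pow E" for A
  proof -
    have "(\<Sum>B\<in>Pow E. \<Sum>e\<in>E. flip_kernel e (a e A) A B) = (\<Sum>e\<in>E. \<Sum>B\<in>Pow E. flip_kernel e (a e A) A B * 1)"
      by (simp add: sum.swap[of _ "Pow E"])
    also have "\<dots> = (\<Sum>e\<in>E. 1)"
      using flip_kernel_sum[OF assms(1), of A _ "a _ A" "\<lambda>_. 1"] that by (intro sum.cong) auto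
    also have "\<dots> = real (card E)" by simp
    finally show ?thesis using card by (simp flip: sum_divide_distrib)
  qed
  show "\<pi> A * ((\<Sum>e\<in>E. flip_kernel e (a e A) A B) / real (card E))
      = \<pi> B * ((\<Sum>e\<in>E. flip_kernel e (a e B) B A) / real (card E))" if "A \<in> Pow E" "B \<in> Pow E" for A B
  proof -
    have "\<pi> A * flip_kernel e (a e A) A B = \<pi> B * flip_kernel e (a e B) B A" if "e \<in> E" for e
      by (rule flip_kernel_reversible[where a = "a e"]) (use balance that \<open>A \<in> Pow E\<close> \<open>B \<in> Pow E\<close> in auto)
    then show ?thesis by (simp add: sum_distrib_left)
  qed
qed

lemma flip_average_empty_lt_1:
  assumes "finite E" "E \<noteq> {}" "\<And>e. e \<in> E \<Longrightarrow> 0 < a e"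
  shows "(\<Sum>e\<in>E. flip_kernel e (a e) {} {}) / real (card E) < 1"
proof -
  have "(\<Sum>e\<in>E. flip_kernel e (a e) {} {}) < (\<Sum>e\<in>E. 1)"
    using assms by (intro sum_strict_mono) (auto simp: flip_kernel_empty)
  then show ?thesis using assms(1,2) by (simp add: card_gt_0_iff)
qed

section \<open>Connected components\<close>

locale edge_ends =
  fixes end1 end2 :: "'e \<Rightarrow> 'v"
begin

abbreviation conn :: "'e set \<Rightarrow> 'v \<Rightarrow> 'v \<Rightarrow> bool" where "conn \<equiv> connected_in end1 end2"

lemma conn_refl: "conn A x x"
  unfolding connected_in_def by simp

lemma conn_trans: "conn A x y \<Longrightarrow> conn A y z \<Longrightarrow> conn A x z"
  unfolding connected_in_def by (rule rtrancl_trans)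

lemma conn_sym: "conn A x y \<Longrightarrow> conn A y x"
  unfolding connected_in_def
proof (induction rule: rtrancl_induct)
  case (step y z)
  then have "(z, y) \<in> edge_rel end1 end2 A" unfolding edge_rel_def by blast
  then show ?case using step(3) by (meson converse_rtrancl_into_rtrancl)
qed simp

lemma conn_edge: "e \<in> A \<Longrightarrow> conn A (end1 e) (end2 e)"
  unfolding connected_in_def edge_rel_def by (intro r_into_rtrancl) blast

lemma conn_insert:
  "conn (insert e A) x y \<longleftrightarrow>
     conn A x y \<or> (conn A x (end1 e) \<and> conn A (end2 e) y) \<or> (conn A x (end2 e) \<and> conn A (end1 e) y)"
  (is "?L \<longleftrightarrow> ?R")
proof
  have edge_rel_insert:
    "edge_rel end1 end2 (insert e A) = edge_rel end1 end2 A \<union> {(end1 e, end2 e), (end2 e, end1 e)}"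
    unfolding edge_rel_def by blast
  assume ?L
  then have "(x, y) \<in> (edge_rel end1 end2 (insert e A))\<^sup>*" unfolding connected_in_def .
  then show ?R
  proof (induction rule: rtrancl_induct)
    case base then show ?case using conn_refl by blast
  next
    case (step y z)
    from step(2) consider "conn A y z" | "y = end1 e" "z = end2 e" | "y = end2 e" "z = end1 e"
      unfolding edge_rel_insert connected_in_def by blast
    then show ?case using step(3) conn_trans conn_sym conn_refl by cases metis+
  qed
next
  have mono: "conn A a b \<Longrightarrow> conn (insert e A) a b" for a b
    unfolding connected_in_def by (rule rtrancl_mono[THEN subsetD, rotated]) (auto simp: edge_rel_def)
  have edge: "conn (insert e A) (end1 e) (end2 e)" "conn (insert e A) (end2 e) (end1 e)"
    using conn_edge[of e "insert e A"] conn_sym by auto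
  assume ?R
  then show ?L using mono edge conn_trans by meson
qed

end

locale finite_vertex_graph = edge_ends end1 end2
  for V :: "'v set" and end1 end2 :: "'e \<Rightarrow> 'v" +
  assumes finite_vertices: "finite V"
begin

definition component :: "'e set \<Rightarrow> 'v \<Rightarrow> 'v set" where
  "component A x = {y\<in>V. conn A x y}"

definition num_components :: "'e set \<Rightarrow> nat" where
  "num_components A = card (component A ` V)"

lemma component_eq: "conn A x y \<Longrightarrow> component A x = component A y"
  unfolding component_def using conn_trans conn_sym by blast

lemma component_eq_iff: "y \<in> V \<Longrightarrow> component A x = component A y \<longleftrightarrow> conn A x y"
  using component_eq[of A x y] conn_refl unfolding component_def by blast

lemma num_components_insert_connected:
  assumes "conn A (end1 e) (end2 e)"
  shows "num_components (insert e A) = num_components A"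
proof -
  have "conn (insert e A) x y \<longleftrightarrow> conn A x y" for x y
    unfolding conn_insert using assms conn_trans conn_sym by metis
  then show ?thesis unfolding num_components_def component_def by simp
qed

lemma components_insert_bridge:
  assumes uv: "end1 e \<in> V" "end2 e \<in> V" and bridge: "\<not> conn A (end1 e) (end2 e)"
  defines "cu \<equiv> component A (end1 e)" and "cv \<equiv> component A (end2 e)"
  shows "component (insert e A) ` V = insert (cu \<union> cv) (component A ` V - {cu, cv})"
proof -
  have merged: "component (insert e A) x = cu \<union> cv" if "conn A x (end1 e) \<or> conn A x (end2 e)" for x
  proof -
    have "conn (insert e A) x y \<longleftrightarrow> conn A (end1 e) y \<or> conn A (end2 e) y" for y
      unfolding conn_insert using that bridge conn_trans conn_sym by metis
    then show ?thesis unfolding cu_def cv_def component_def by auto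
  qed
  have unchanged: "component (insert e A) x = component A x"
    if "\<not> conn A x (end1 e)" "\<not> conn A x (end2 e)" for x
  proof -
    have "conn (insert e A) x y \<longleftrightarrow> conn A x y" for y
      unfolding conn_insert using that by metis
    then show ?thesis unfolding component_def by auto
  qed
  have other: "component A x \<noteq> cu \<and> component A x \<noteq> cv \<longleftrightarrow> \<not> conn A x (end1 e) \<and> \<not> conn A x (end2 e)"
    for x
    unfolding cu_def cv_def using component_eq_iff uv by blast
  show ?thesis
  proof (intro equalityI subsetI)
    fix X assume "X \<in> component (insert e A) ` V"
    then obtain x where "x \<in> V" "X = component (insert e A) x" by blast
    then show "X \<in> insert (cu \<union> cv) (component A ` V - {cu, cv})"
      using merged unchanged other by (cases "conn A x (end1 e) \<or> conn A x (end2 e)") auto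
  next
    fix X assume "X \<in> insert (cu \<union> cv) (component A ` V - {cu, cv})"
    then consider "X = cu \<union> cv" | x where "x \<in> V" "X = component A x" "X \<noteq> cu" "X \<noteq> cv" by blast
    then show "X \<in> component (insert e A) ` V"
    proof cases
      case 1
      then show ?thesis using merged[of "end1 e"] uv conn_refl by (metis image_eqI)
    next
      case 2
      then show ?thesis using unchanged[of x] other[of x] by (metis image_eqI)
    qed
  qed
qed

lemma num_components_insert_bridge:
  assumes uv: "end1 e \<in> V" "end2 e \<in> V" and bridge: "\<not> conn A (end1 e) (end2 e)"
  shows "num_components A = Suc (num_components (insert e A))"
proof -
  define cu where "cu = component A (end1 e)"
  define cv where "cv = component A (end2 e)"
  have in_comps: "cu \<in> component A ` V" "cv \<in> component A ` V" and "cu \<noteq> cv"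
    using uv component_eq_iff[of "end2 e" A "end1 e"] bridge unfolding cu_def cv_def by auto
  have "cu \<union> cv \<notin> component A ` V"
  proof
    assume "cu \<union> cv \<in> component A ` V"
    then obtain y where "cu \<union> cv = component A y" by blast
    then have "conn A y (end1 e)" "conn A y (end2 e)"
      using uv conn_refl unfolding cu_def cv_def component_def by blast+
    then show False using bridge conn_trans conn_sym by blast
  qed
  moreover have "finite (component A ` V)" using finite_vertices by simp
  ultimately have "card (component (insert e A) ` V) = Suc (card (component A ` V) - 2)"
    unfolding components_insert_bridge[OF assms, folded cu_def cv_def]
    using in_comps \<open>cu \<noteq> cv\<close> by (simp add: card_insert_if card_Diff_subset)
  moreover have "2 \<le> card (component A ` V)"
    using in_comps \<open>cu \<noteq> cv\<close> \<open>finite (component A ` V)\<close>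
    by (metis card_2_iff card_mono empty_subsetI insert_subset)
  ultimately show ?thesis unfolding num_components_def by simp
qed

end

section \<open>Heat-bath and single-bond dynamics of the random-cluster model\<close>

locale random_cluster = finite_vertex_graph V end1 end2
  for V :: "'v set" and end1 end2 :: "'e \<Rightarrow> 'v" +
  fixes E :: "'e set" and p q :: real
  assumes finite_edges: "finite E" and edges_nonempty: "E \<noteq> {}"
    and ends_in_vertices: "\<And>e. e \<in> E \<Longrightarrow> end1 e \<in> V \<and> end2 e \<in> V"
    and p_pos: "0 < p" and p_lt_1: "p < 1" and q_ge_1: "1 \<le> q"
begin

definition rc_weight :: "'e set \<Rightarrow> real" where
  "rc_weight A = (p / (1 - p)) ^ card A * q ^ num_components A"

definition hb_prob :: "'e \<Rightarrow> 'e set \<Rightarrow> real" where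
  "hb_prob e A = (if conn (A - {e}) (end1 e) (end2 e) then p else p / (p + q * (1 - p)))"

definition sb_prob :: "'e \<Rightarrow> 'e set \<Rightarrow> real" where
  "sb_prob e A = (if conn A (end1 e) (end2 e) then p else p / q)"

abbreviation HB :: "'e set \<Rightarrow> 'e set \<Rightarrow> real" where "HB \<equiv> P_HB E end1 end2 p q"
abbreviation SB :: "'e set \<Rightarrow> 'e set \<Rightarrow> real" where "SB \<equiv> P_SB E end1 end2 p q"

lemma denominator_bounds: "1 \<le> p + q * (1 - p)" "p + q * (1 - p) \<le> q"
proof -
  have "1 * (1 - p) \<le> q * (1 - p)" using q_ge_1 p_lt_1 by (intro mult_right_mono) auto
  then show "1 \<le> p + q * (1 - p)" by simp
  have "p * 1 \<le> p * q" using q_ge_1 p_pos by (intro mult_left_mono) auto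
  then show "p + q * (1 - p) \<le> q" by (simp add: algebra_simps)
qed

lemma one_minus_hb_open: "1 - p / (p + q * (1 - p)) = q * (1 - p) / (p + q * (1 - p))"
  using denominator_bounds(1) by (simp add: field_simps)

lemma hb_prob_bounds: "0 < hb_prob e A" "hb_prob e A < 1"
proof -
  have "p < p + q * (1 - p)" using p_lt_1 q_ge_1 by (simp add: mult_pos_pos)
  then show "0 < hb_prob e A" "hb_prob e A < 1"
    unfolding hb_prob_def using p_pos p_lt_1 by auto
qed

lemma sb_prob_bounds: "0 < sb_prob e A" "sb_prob e A \<le> 1"
  unfolding sb_prob_def using p_pos p_lt_1 q_ge_1 by (auto simp: divide_le_eq)

lemma hb_prob_insert: "hb_prob e (insert e A) = hb_prob e A"
  unfolding hb_prob_def by simp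

lemma P_HB_eq: "HB A B = (\<Sum>e\<in>E. flip_kernel e (hb_prob e A) A B) / real (card E)"
  unfolding P_HB_def hb_local_def flip_kernel_def hb_prob_def Let_def
  using one_minus_hb_open by (intro arg_cong2[where f = "(/)"] sum.cong) auto

lemma P_SB_eq: "SB A B = (\<Sum>e\<in>E. flip_kernel e (sb_prob e A) A B) / real (card E)"
  unfolding P_SB_def sb_local_def flip_kernel_def sb_prob_def Let_def
  by (intro arg_cong2[where f = "(/)"] sum.cong) auto

lemma rc_weight_pos: "0 < rc_weight A"
  unfolding rc_weight_def using p_pos p_lt_1 q_ge_1 by simp

lemma rc_weight_insert:
  assumes "D \<subseteq> E" "e \<in> E" "e \<notin> D"
  shows "rc_weight (insert e D)
    = rc_weight D * (if conn D (end1 e) (end2 e) then p / (1 - p) else p / (q * (1 - p)))"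
proof -
  have card: "card (insert e D) = Suc (card D)"
    using assms finite_edges by (simp add: finite_subset)
  show ?thesis
  proof (cases "conn D (end1 e) (end2 e)")
    case True
    then show ?thesis unfolding rc_weight_def card by (simp add: num_components_insert_connected)
  next
    case False
    then have "num_components D = Suc (num_components (insert e D))"
      using num_components_insert_bridge ends_in_vertices assms(2) by blast
    then show ?thesis unfolding rc_weight_def card using False q_ge_1 by simp
  qed
qed

lemma heat_bath_balance:
  assumes "D \<subseteq> E" "e \<in> E" "e \<notin> D"
  shows "rc_weight (insert e D) * (1 - hb_prob e D) = rc_weight D * hb_prob e D"
  using rc_weight_insert[OF assms] assms(3) p_lt_1 q_ge_1 denominator_bounds(1)
  by (simp add: hb_prob_def one_minus_hb_open)

lemma single_bond_balance:
  assumes "D \<subseteq> E" "e \<in> E" "e \<notin> D"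
  shows "rc_weight (insert e D) * (1 - sb_prob e (insert e D)) = rc_weight D * sb_prob e D"
  using rc_weight_insert[OF assms] conn_edge[of e "insert e D"] p_lt_1 q_ge_1
  by (simp add: sb_prob_def)

lemma reversible_heat_bath: "reversible_chain (Pow E) rc_weight HB"
  unfolding P_HB_eq
  using finite_edges edges_nonempty rc_weight_pos hb_prob_bounds
  by (intro reversible_chain_flip_average) (auto simp: less_imp_le hb_prob_insert heat_bath_balance)

lemma reversible_single_bond: "reversible_chain (Pow E) rc_weight SB"
  unfolding P_SB_eq
  using finite_edges edges_nonempty rc_weight_pos sb_prob_bounds
  by (intro reversible_chain_flip_average) (auto simp: less_imp_le single_bond_balance)

lemma heat_bath_psd: "0 \<le> inner_on (Pow E) rc_weight f (kernel_app (Pow E) HB f)"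
proof -
  have "inner_on (Pow E) rc_weight f (kernel_app (Pow E) HB f)
      = (\<Sum>e\<in>E. \<Sum>A\<in>Pow E. rc_weight A * f A * (\<Sum>B\<in>Pow E. flip_kernel e (hb_prob e A) A B * f B))
        / real (card E)"
    unfolding inner_on_def kernel_app_def P_HB_eq
    by (simp add: sum_distrib_left sum_distrib_right sum_divide_distrib mult_ac sum.swap[of _ E])
  also have "0 \<le> \<dots>"
    using finite_edges rc_weight_pos hb_prob_bounds
    by (intro divide_nonneg_nonneg sum_nonneg flip_kernel_quadratic_nonneg)
      (auto simp: less_imp_le hb_prob_insert heat_bath_balance)
  finally show ?thesis .
qed

lemma hb_open_bounds: "p / q \<le> p / (p + q * (1 - p))" "p / (p + q * (1 - p)) \<le> p"
proof -
  show "p / q \<le> p / (p + q * (1 - p))"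
    using p_pos denominator_bounds by (intro divide_left_mono) auto
  have "p * 1 \<le> p * (p + q * (1 - p))"
    using p_pos denominator_bounds by (intro mult_left_mono) auto
  then show "p / (p + q * (1 - p)) \<le> p"
    using denominator_bounds by (simp add: divide_le_eq)
qed

lemma single_bond_le_heat_bath: "A \<noteq> B \<Longrightarrow> SB A B \<le> HB A B"
  unfolding P_HB_eq P_SB_eq
  by (intro divide_right_mono sum_mono flip_kernel_offdiag_le[where c = 1, simplified])
    (auto simp: hb_prob_def sb_prob_def conn_edge hb_open_bounds)

lemma comparison_constant:
  defines "c \<equiv> (p + q * (1 - p)) / q"
  shows "0 < c" "c * p \<le> p" "c * (1 - p) \<le> 1 - p" "c * (p / (p + q * (1 - p))) = p / q"
    "c * (1 - p / (p + q * (1 - p))) = 1 - p"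
proof -
  show "0 < c" using denominator_bounds q_ge_1 unfolding c_def by auto
  moreover have "c \<le> 1" using denominator_bounds q_ge_1 unfolding c_def by auto
  ultimately show "c * p \<le> p" "c * (1 - p) \<le> 1 - p"
    using p_pos p_lt_1 by (simp_all add: mult_le_cancel_right1)
  show "c * (p / (p + q * (1 - p))) = p / q" "c * (1 - p / (p + q * (1 - p))) = 1 - p"
    using denominator_bounds q_ge_1 unfolding c_def one_minus_hb_open by auto
qed

lemma heat_bath_scaled_le_single_bond:
  assumes "A \<noteq> B"
  shows "(p + q * (1 - p)) / q * HB A B \<le> SB A B"
proof -
  let ?c = "(p + q * (1 - p)) / q"
  have "?c * flip_kernel e (hb_prob e A) A B \<le> flip_kernel e (sb_prob e A) A B" for e
    using comparison_constant conn_edge[of e A]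
    by (intro flip_kernel_offdiag_le[OF assms]) (auto simp: hb_prob_def sb_prob_def)
  then have "?c * (\<Sum>e\<in>E. flip_kernel e (hb_prob e A) A B) \<le> (\<Sum>e\<in>E. flip_kernel e (sb_prob e A) A B)"
    unfolding sum_distrib_left by (rule sum_mono)
  then have "?c * (\<Sum>e\<in>E. flip_kernel e (hb_prob e A) A B) / real (card E)
      \<le> (\<Sum>e\<in>E. flip_kernel e (sb_prob e A) A B) / real (card E)"
    by (rule divide_right_mono) simp
  then show ?thesis unfolding P_HB_eq P_SB_eq by simp
qed

theorem spectral_gap_single_bond_bounds:
  "(p + q * (1 - p)) / q * spectral_gap E HB \<le> spectral_gap E SB \<and> spectral_gap E SB \<le> spectral_gap E HB"
proof -
  note chains = reversible_heat_bath reversible_single_bond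
  have lower: "(p + q * (1 - p)) / q * dirichlet_form (Pow E) rc_weight HB f \<le> dirichlet_form (Pow E) rc_weight SB f" for f
    by (rule dirichlet_form_le_of_kernel_le[OF chains heat_bath_scaled_le_single_bond])
  have upper: "1 * dirichlet_form (Pow E) rc_weight SB f \<le> dirichlet_form (Pow E) rc_weight HB f" for f
    using dirichlet_form_le_of_kernel_le[OF chains(2,1), of 1] single_bond_le_heat_bath by simp
  have harmonic: "harmonic_on (Pow E) HB = harmonic_on (Pow E) SB"
    using harmonic_on_subset_of_dirichlet_le[OF chains comparison_constant(1) lower]
      harmonic_on_subset_of_dirichlet_le[OF chains(2,1) _ upper] by auto
  have single_bond_psd: "0 \<le> inner_on (Pow E) rc_weight f (kernel_app (Pow E) SB f)" for f
    using upper[of f] heat_bath_psd[of f] unfolding dirichlet_form_def by simp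
  have diagonal: "HB {} {} \<noteq> 1" "SB {} {} \<noteq> 1"
    unfolding P_HB_eq P_SB_eq
    using flip_average_empty_lt_1[OF finite_edges edges_nonempty] hb_prob_bounds sb_prob_bounds
    by (metis less_irrefl)+
  have "(p + q * (1 - p)) / q * spectral_gap_on (Pow E) HB \<le> spectral_gap_on (Pow E) SB"
    using comparison_constant(1)
    by (intro spectral_gap_on_le_of_dirichlet_le[OF chains heat_bath_psd single_bond_psd _ diagonal(1)
          _ diagonal(2) harmonic _ lower]) auto
  moreover have "1 * spectral_gap_on (Pow E) SB \<le> spectral_gap_on (Pow E) HB"
    by (intro spectral_gap_on_le_of_dirichlet_le[OF chains(2,1) single_bond_psd heat_bath_psd _ diagonal(2)
          _ diagonal(1) harmonic[symmetric] _ upper]) auto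
  ultimately show ?thesis unfolding spectral_gap_eq_spectral_gap_on by simp
qed

end

theorem lemma2p7:
  fixes V :: "'v set" and E :: "'e set" and end1 end2 :: "'e \<Rightarrow> 'v"
    and p :: real and q :: nat
  assumes "finite V" and "finite E" and "E \<noteq> {}"
    and "\<forall>e\<in>E. end1 e \<in> V \<and> end2 e \<in> V"
    and "0 < p" and "p < 1" and "1 \<le> q"
  shows "(1 - p * (1 - 1 / real q)) * spectral_gap E (P_HB E end1 end2 p (real q))
           \<le> spectral_gap E (P_SB E end1 end2 p (real q))
       \<and> spectral_gap E (P_SB E end1 end2 p (real q))
           \<le> spectral_gap E (P_HB E end1 end2 p (real q))"
proof -
  interpret random_cluster V end1 end2 E p "real q"
    by unfold_locales (use assms in auto)
  have "(p + real q * (1 - p)) / real q = 1 - p * (1 - 1 / real q)"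
    using assms(7) by (simp add: field_simps)
  then show ?thesis using spectral_gap_single_bond_bounds by simp
qed

end
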